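(* Fix $\alpha\in(0,1)$. In $\mathbb{Z}^4$, let $K=\{(x_1,x_2,0,0)\in\mathbb{Z}^4: x_1\ge0,\ |x_2|\le x_1^\alpha\}$ and $\Gamma=\mathbb{Z}^4\setminus K$, and equip $\mathbb{Z}^4$ with the lazy simple random walk (at each step stay put with probability $1/2$, otherwise move to one of the $8$ nearest neighbours, each with probability $1/16$). Then $\mathbb{Z}^4$ is $S$-transient with respect to $K$. Moreover, for every $\varepsilon\in(0,1)$ there is $L_\varepsilon>0$ such that $\psi_K(\mathbf{x})\le1-\varepsilon$ for all $\mathbf{x}\in\Gamma$ with $d_{\mathbf{x}}\ge|x_1^*|\ge L_\varepsilon$, where $d_{\mathbf{x}}:=d(\mathbf{x},K)$ and $\mathbf{x}^*=(x_1^*,x_2^*,x_3^*,x_4^* )\in K$ is a point achieving $d(\mathbf{x},K)$.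
   Context: $d$ is the graph (i.e. $\ell^1$) distance on $\mathbb{Z}^4$. $\psi_K(\mathbf{x})=\mathbb{P}^{\mathbf{x}}(\tau_K<\infty)$ where $\tau_K=\min\{n\ge0:X_n\in K\}$ for the lazy simple random walk $(X_n)$. $\mathbb{Z}^4$ is $S$-transient with respect to $K$ if there is a point $\mathbf{x}$ with $\psi_K(\mathbf{x})<1$. *)

theory Defs
  imports "HOL-Probability.Probability" "HOL-Library.Product_Plus"
begin

type_synonym pt = "int \<times> int \<times> int \<times> int"

definition l1dist :: "pt \<Rightarrow> pt \<Rightarrow> int" where
  "l1dist x y = (case x of (x1,x2,x3,x4) \<Rightarrow> case y of (y1,y2,y3,y4) \<Rightarrow>
      \<bar>x1 - y1\<bar> + \<bar>x2 - y2\<bar> + \<bar>x3 - y3\<bar> + \<bar>x4 - y4\<bar>)"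

definition nbrs :: "pt set" where
  "nbrs = {(1,0,0,0), (-1,0,0,0), (0,1,0,0), (0,-1,0,0),
           (0,0,1,0), (0,0,-1,0), (0,0,0,1), (0,0,0,-1)}"

definition lazy_step :: "pt pmf" where
  "lazy_step = do { b \<leftarrow> bernoulli_pmf (1/2);
                    if b then return_pmf 0 else pmf_of_set nbrs }"

text \<open>Path space: i.i.d. sequence of increments.\<close>
definition walk_space :: "pt stream measure" where
  "walk_space = stream_space (measure_pmf lazy_step)"

definition walk :: "pt \<Rightarrow> pt stream \<Rightarrow> nat \<Rightarrow> pt" where
  "walk x \<omega> n = x + sum_list (stake n \<omega>)"

text \<open>psi_K(x) = P^x(tau_K < infinity), tau_K = min{n >= 0 : X_n in K}.\<close>
definition psi :: "pt set \<Rightarrow> pt \<Rightarrow> real" where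
  "psi K x = measure walk_space {\<omega> \<in> space walk_space. \<exists>n. walk x \<omega> n \<in> K}"

definition S_transient :: "pt set \<Rightarrow> bool" where
  "S_transient K \<longleftrightarrow> (\<exists>x. psi K x < 1)"

definition Kset :: "real \<Rightarrow> pt set" where
  "Kset \<alpha> = {(x1,x2,x3,x4). x3 = 0 \<and> x4 = 0 \<and> x1 \<ge> 0 \<and>
                real_of_int \<bar>x2\<bar> \<le> real_of_int x1 powr \<alpha>}"

definition nearest :: "pt set \<Rightarrow> pt \<Rightarrow> pt \<Rightarrow> bool" where
  "nearest K x xs \<longleftrightarrow> xs \<in> K \<and> (\<forall>y\<in>K. l1dist x xs \<le> l1dist x y)"

end

theory Submission
  imports Defs "HOL-Real_Asymp.Real_Asymp"
begin

text \<open>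
  For the lazy walk on Z^4 the kernel h(z) = 1 / (|z|^2 + 4) is superharmonic, hence so is the
  potential U(x) = sum of h(x - y) over y in K, for any set K.  Since 4 U >= 4 h(0) = 1 on K,
  optional stopping gives psi_K <= 4 U.  For the thin set K, the slice of K with first coordinate n
  has at most 2 n^alpha + 1 points, all at l1-distance at least (n + d) / 5 from a point x with
  d(x, K) = d >= |x_1^*|.  Hence 4 U(x) <= 4 sum_n (2 n^alpha + 1) 200 / (n + d)^2, and because
  alpha < 1 this series tends to 0 as d tends to infinity (Tannery's theorem, dominating by d = 1).
\<close>

section \<open>Hitting probabilities and superharmonic functions\<close>

definition hits_before :: "pt set \<Rightarrow> pt \<Rightarrow> nat \<Rightarrow> pt stream set" where
  "hits_before K x n = {\<omega> \<in> space walk_space. \<exists>m\<le>n. walk x \<omega> m \<in> K}"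

lemma walk_0 [simp]: "walk x \<omega> 0 = x"
  by (simp add: walk_def)

lemma walk_Cons_Suc [simp]: "walk x (s ## \<omega>) (Suc m) = walk (x + s) \<omega> m"
  by (simp add: walk_def add.assoc)

lemma prob_space_walk_space: "prob_space walk_space"
  unfolding walk_space_def by (rule prob_space.prob_space_stream_space) (rule prob_space_measure_pmf)

lemma measurable_walk: "(\<lambda>\<omega>. walk x \<omega> n) \<in> walk_space \<rightarrow>\<^sub>M count_space UNIV"
proof -
  have "sets walk_space = sets (stream_space (count_space UNIV))"
    unfolding walk_space_def by (intro sets_stream_space_cong) simp
  then have "stake n \<in> walk_space \<rightarrow>\<^sub>M count_space UNIV"
    using measurable_stake[where i=n and 'a=pt] by (subst measurable_cong_sets[OF _ refl]) auto
  then show ?thesis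
    unfolding walk_def by simp
qed

lemma sets_hits_before: "hits_before K x n \<in> sets walk_space"
proof -
  have "hits_before K x n = (\<Union>m\<le>n. (\<lambda>\<omega>. walk x \<omega> m) -` K \<inter> space walk_space)"
    unfolding hits_before_def by auto
  also have "\<dots> \<in> sets walk_space"
    using measurable_walk by (intro sets.finite_UN) (auto simp: measurable_def)
  finally show ?thesis .
qed

lemma emeasure_hits_before_Suc:
  assumes "x \<notin> K"
  shows "emeasure walk_space (hits_before K x (Suc n))
       = (\<integral>\<^sup>+s. emeasure walk_space (hits_before K (x + s) n) \<partial>lazy_step)"
proof -
  have shift: "{\<omega> \<in> space walk_space. s ## \<omega> \<in> hits_before K x (Suc n)} = hits_before K (x + s) n"
    for s
  proof -
    have "s ## \<omega> \<in> space walk_space \<longleftrightarrow> \<omega> \<in> space walk_space" for \<omega>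
      by (simp add: walk_space_def space_stream_space)
    moreover have "(\<exists>m\<le>Suc n. walk x (s ## \<omega>) m \<in> K) \<longleftrightarrow> (\<exists>m\<le>n. walk (x + s) \<omega> m \<in> K)" for \<omega>
    proof
      assume "\<exists>m\<le>Suc n. walk x (s ## \<omega>) m \<in> K"
      then obtain m where "m \<le> Suc n" "walk x (s ## \<omega>) m \<in> K" by blast
      with assms show "\<exists>m\<le>n. walk (x + s) \<omega> m \<in> K" by (cases m) auto
    next
      assume "\<exists>m\<le>n. walk (x + s) \<omega> m \<in> K"
      then show "\<exists>m\<le>Suc n. walk x (s ## \<omega>) m \<in> K" by (metis Suc_le_mono walk_Cons_Suc)
    qed
    ultimately show ?thesis
      unfolding hits_before_def by auto
  qed
  have "emeasure walk_space (hits_before K x (Suc n))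
      = (\<integral>\<^sup>+s. emeasure walk_space {\<omega> \<in> space walk_space. s ## \<omega> \<in> hits_before K x (Suc n)} \<partial>lazy_step)"
    unfolding walk_space_def
    by (rule prob_space.emeasure_stream_space[OF prob_space_measure_pmf])
       (rule sets_hits_before[unfolded walk_space_def])
  then show ?thesis
    by (simp only: shift)
qed

lemma emeasure_hits_before_le_superharmonic:
  assumes ge_1: "\<And>y. y \<in> K \<Longrightarrow> 1 \<le> F y"
    and superharmonic: "\<And>y. (\<integral>\<^sup>+s. F (y + s) \<partial>lazy_step) \<le> F y"
  shows "emeasure walk_space (hits_before K x n) \<le> F x"
proof -
  have in_K: "emeasure walk_space (hits_before K y m) \<le> F y" if "y \<in> K" for y m
    using ge_1[OF that] prob_space.emeasure_le_1[OF prob_space_walk_space] order_trans by blast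
  show ?thesis
  proof (induction n arbitrary: x)
    case 0
    show ?case
      using in_K[of x 0] by (cases "x \<in> K") (auto simp: hits_before_def)
  next
    case (Suc n)
    show ?case
    proof (cases "x \<in> K")
      case False
      then have "emeasure walk_space (hits_before K x (Suc n))
          = (\<integral>\<^sup>+s. emeasure walk_space (hits_before K (x + s) n) \<partial>lazy_step)"
        by (rule emeasure_hits_before_Suc)
      also have "\<dots> \<le> (\<integral>\<^sup>+s. F (x + s) \<partial>lazy_step)"
        by (intro nn_integral_mono Suc.IH)
      also have "\<dots> \<le> F x"
        by (rule superharmonic)
      finally show ?thesis .
    qed (rule in_K)
  qed
qed

lemma psi_le_superharmonic:
  assumes "\<And>y. y \<in> K \<Longrightarrow> 1 \<le> F y"
    and "\<And>y. (\<integral>\<^sup>+s. F (y + s) \<partial>lazy_step) \<le> F y"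
    and "F x \<le> ennreal c" "0 \<le> c"
  shows "psi K x \<le> c"
proof -
  interpret prob_space walk_space by (rule prob_space_walk_space)
  have "{\<omega> \<in> space walk_space. \<exists>n. walk x \<omega> n \<in> K} = (\<Union>n. hits_before K x n)"
    unfolding hits_before_def by auto
  moreover have "incseq (hits_before K x)"
    unfolding incseq_def hits_before_def by (blast intro: le_trans)
  moreover have "range (hits_before K x) \<subseteq> sets walk_space"
    using sets_hits_before by blast
  ultimately have "emeasure walk_space {\<omega> \<in> space walk_space. \<exists>n. walk x \<omega> n \<in> K}
      = (SUP n. emeasure walk_space (hits_before K x n))"
    by (simp add: SUP_emeasure_incseq)
  also have "\<dots> \<le> ennreal c"
  proof (rule SUP_least)
    fix n
    show "emeasure walk_space (hits_before K x n) \<le> ennreal c"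
      using emeasure_hits_before_le_superharmonic[of K F x n, OF assms(1,2)] assms(3)
      by (rule order_trans)
  qed
  finally have "ennreal (psi K x) \<le> ennreal c"
    unfolding psi_def by (simp add: emeasure_eq_measure)
  then show ?thesis
    using assms(4) by simp
qed

section \<open>A superharmonic kernel\<close>

lemma finite_nbrs: "finite nbrs" and nbrs_ne: "nbrs \<noteq> {}" and card_nbrs: "card nbrs = 8"
  unfolding nbrs_def by auto

lemma nn_integral_lazy_step:
  assumes "\<And>s. 0 \<le> g s"
  shows "(\<integral>\<^sup>+s. ennreal (g s) \<partial>lazy_step) = ennreal (g 0 / 2 + (\<Sum>e\<in>nbrs. g e) / 16)"
proof -
  have "(\<integral>\<^sup>+s. ennreal (g s) \<partial>lazy_step)
      = ennreal (g 0) * ennreal (1/2) + ennreal (\<Sum>e\<in>nbrs. g e) / ennreal 8 * ennreal (1/2)"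
    unfolding lazy_step_def using assms
    by (simp add: nn_integral_pmf_of_set finite_nbrs nbrs_ne card_nbrs sum_nonneg del: ennreal_half)
  also have "ennreal (\<Sum>e\<in>nbrs. g e) / ennreal 8 = ennreal ((\<Sum>e\<in>nbrs. g e) / 8)"
    using assms by (intro divide_ennreal sum_nonneg) auto
  also have "ennreal (g 0) * ennreal (1/2) + ennreal ((\<Sum>e\<in>nbrs. g e) / 8) * ennreal (1/2)
      = ennreal (g 0 / 2 + (\<Sum>e\<in>nbrs. g e) / 16)"
    using assms
    by (simp add: ennreal_mult''[symmetric] ennreal_plus[symmetric] sum_nonneg del: ennreal_half ennreal_plus)
  finally show ?thesis .
qed

lemma inverse_pair_le:
  fixes T u W :: real
  assumes "u\<^sup>2 \<le> W" "W < T\<^sup>2" "0 < T"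
  shows "1/(T + u) + 1/(T - u) \<le> 2/T + 2*u\<^sup>2/(T*(T\<^sup>2 - W))"
proof -
  have "\<bar>u\<bar> < T"
    using assms power_less_imp_less_base[of "\<bar>u\<bar>" 2 T] by simp
  then have "0 < T + u" "0 < T - u" "0 < T\<^sup>2 - u\<^sup>2"
    using power_strict_mono[of "\<bar>u\<bar>" T 2] by auto
  then have "1/(T + u) + 1/(T - u) = 2/T + 2*u\<^sup>2/(T*(T\<^sup>2 - u\<^sup>2))"
    using \<open>0 < T\<close> by (simp add: field_simps power2_eq_square)
  also have "\<dots> \<le> 2/T + 2*u\<^sup>2/(T*(T\<^sup>2 - W))"
    using assms by (intro add_left_mono divide_left_mono mult_left_mono mult_pos_pos) auto
  finally show ?thesis .
qed

lemma inverse_sum_le: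
  fixes S :: real
  assumes "0 \<le> S"
  shows "8/(S + 5) + 8*S/((S + 5)*((S + 5)\<^sup>2 - 4*S)) \<le> 8/(S + 4)"
proof -
  define Q where "Q = (S + 5)\<^sup>2 - 4*S"
  have "0 < Q"
    using assms unfolding Q_def by (simp add: power2_eq_square algebra_simps) (smt (verit) mult_nonneg_nonneg)
  have "(Q + S) * (S + 4) \<le> (S + 5) * Q"
    using assms unfolding Q_def by (simp add: power2_eq_square algebra_simps)
  then have "(8*Q + 8*S) * (S + 4) \<le> 8*((S + 5) * Q)"
    by (simp add: algebra_simps)
  have "8/(S + 5) + 8*S/((S + 5)*Q) = 8*(Q + S)/((S + 5)*Q)"
    using \<open>0 < Q\<close> assms by (simp add: add_divide_distrib distrib_left)
  also have "\<dots> \<le> 8/(S + 4)"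
    using \<open>0 < Q\<close> \<open>(8*Q + 8*S) * (S + 4) \<le> 8*((S + 5) * Q)\<close> assms
    by (simp add: divide_simps)
  finally show ?thesis unfolding Q_def .
qed

lemma inverse_neighbour_sum_le:
  fixes a b c d :: real
  shows "1/((a+1)\<^sup>2+b\<^sup>2+c\<^sup>2+d\<^sup>2+4) + 1/((a-1)\<^sup>2+b\<^sup>2+c\<^sup>2+d\<^sup>2+4)
       + 1/(a\<^sup>2+(b+1)\<^sup>2+c\<^sup>2+d\<^sup>2+4) + 1/(a\<^sup>2+(b-1)\<^sup>2+c\<^sup>2+d\<^sup>2+4)
       + 1/(a\<^sup>2+b\<^sup>2+(c+1)\<^sup>2+d\<^sup>2+4) + 1/(a\<^sup>2+b\<^sup>2+(c-1)\<^sup>2+d\<^sup>2+4)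
       + 1/(a\<^sup>2+b\<^sup>2+c\<^sup>2+(d+1)\<^sup>2+4) + 1/(a\<^sup>2+b\<^sup>2+c\<^sup>2+(d-1)\<^sup>2+4)
       \<le> 8/(a\<^sup>2+b\<^sup>2+c\<^sup>2+d\<^sup>2+4)"
proof -
  define S where "S = a\<^sup>2+b\<^sup>2+c\<^sup>2+d\<^sup>2"
  define T where "T = S + 5"
  define Q where "Q = T*(T\<^sup>2 - 4*S)"
  have "0 \<le> S"
    unfolding S_def by simp
  then have "0 < T" "4*S < T\<^sup>2"
    unfolding T_def by (simp_all add: power2_eq_square algebra_simps) (smt (verit) mult_nonneg_nonneg)
  have pair: "1/(T + 2*u) + 1/(T - 2*u) \<le> 2/T + 8*u\<^sup>2/Q" if "u\<^sup>2 \<le> S" for u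
    using inverse_pair_le[of "2*u" "4*S" T] that \<open>0 < T\<close> \<open>4*S < T\<^sup>2\<close>
    unfolding Q_def by (simp add: power_mult_distrib)
  have "a\<^sup>2 \<le> S" "b\<^sup>2 \<le> S" "c\<^sup>2 \<le> S" "d\<^sup>2 \<le> S"
    unfolding S_def by simp_all
  note pairs = this[THEN pair]
  have shifts: "(a+1)\<^sup>2+b\<^sup>2+c\<^sup>2+d\<^sup>2+4 = T + 2*a" "(a-1)\<^sup>2+b\<^sup>2+c\<^sup>2+d\<^sup>2+4 = T - 2*a"
     "a\<^sup>2+(b+1)\<^sup>2+c\<^sup>2+d\<^sup>2+4 = T + 2*b" "a\<^sup>2+(b-1)\<^sup>2+c\<^sup>2+d\<^sup>2+4 = T - 2*b"
     "a\<^sup>2+b\<^sup>2+(c+1)\<^sup>2+d\<^sup>2+4 = T + 2*c" "a\<^sup>2+b\<^sup>2+(c-1)\<^sup>2+d\<^sup>2+4 = T - 2*c"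
     "a\<^sup>2+b\<^sup>2+c\<^sup>2+(d+1)\<^sup>2+4 = T + 2*d" "a\<^sup>2+b\<^sup>2+c\<^sup>2+(d-1)\<^sup>2+4 = T - 2*d"
     "a\<^sup>2+b\<^sup>2+c\<^sup>2+d\<^sup>2+4 = S + 4"
    unfolding T_def S_def by (simp_all add: power2_eq_square algebra_simps)
  have "8*a\<^sup>2/Q + 8*b\<^sup>2/Q + 8*c\<^sup>2/Q + 8*d\<^sup>2/Q = 8*S/Q"
    unfolding S_def by (simp add: add_divide_distrib algebra_simps)
  then show ?thesis
    unfolding shifts using pairs inverse_sum_le[OF \<open>0 \<le> S\<close>] unfolding Q_def T_def by linarith
qed

definition inv_sq_kernel :: "pt \<Rightarrow> real" where
  "inv_sq_kernel z = (case z of (a, b, c, d) \<Rightarrow>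
     1 / ((real_of_int a)\<^sup>2 + (real_of_int b)\<^sup>2 + (real_of_int c)\<^sup>2 + (real_of_int d)\<^sup>2 + 4))"

lemma inv_sq_kernel_pos: "0 < inv_sq_kernel z"
  unfolding inv_sq_kernel_def by (cases z) (auto intro!: add_nonneg_pos)

lemma inv_sq_kernel_0 [simp]: "inv_sq_kernel 0 = 1/4"
  by (simp add: inv_sq_kernel_def zero_prod_def)

lemma inv_sq_kernel_superharmonic:
  "(\<integral>\<^sup>+s. ennreal (inv_sq_kernel (z + s)) \<partial>lazy_step) \<le> ennreal (inv_sq_kernel z)"
proof -
  obtain a b c d where z: "z = (a, b, c, d)"
    by (cases z) auto
  have "(\<Sum>e\<in>nbrs. inv_sq_kernel (z + e)) \<le> 8 * inv_sq_kernel z"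
    using inverse_neighbour_sum_le[of "of_int a" "of_int b" "of_int c" "of_int d"]
    unfolding z nbrs_def inv_sq_kernel_def by (simp add: add.assoc)
  then show ?thesis
    using inv_sq_kernel_pos by (simp add: nn_integral_lazy_step less_imp_le)
qed

lemma sum_abs_sq_le:
  fixes p q r s :: real
  shows "(\<bar>p\<bar> + \<bar>q\<bar> + \<bar>r\<bar> + \<bar>s\<bar>)\<^sup>2 \<le> 4 * (p\<^sup>2 + q\<^sup>2 + r\<^sup>2 + s\<^sup>2)"
proof -
  have "0 \<le> (\<bar>p\<bar>-\<bar>q\<bar>)\<^sup>2 + (\<bar>p\<bar>-\<bar>r\<bar>)\<^sup>2 + (\<bar>p\<bar>-\<bar>s\<bar>)\<^sup>2 + (\<bar>q\<bar>-\<bar>r\<bar>)\<^sup>2 + (\<bar>q\<bar>-\<bar>s\<bar>)\<^sup>2 + (\<bar>r\<bar>-\<bar>s\<bar>)\<^sup>2"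
    by simp
  then show ?thesis
    by (simp add: power2_eq_square algebra_simps abs_mult_self_eq)
qed

lemma inv_sq_kernel_diff_le: "inv_sq_kernel (x - y) \<le> 8 / (real_of_int (l1dist x y) + 1)\<^sup>2"
proof -
  obtain x1 x2 x3 x4 y1 y2 y3 y4 where xy: "x = (x1, x2, x3, x4)" "y = (y1, y2, y3, y4)"
    by (cases x, cases y) auto
  define l where "l = real_of_int (l1dist x y)"
  define S where "S = (real_of_int (x1 - y1))\<^sup>2 + (real_of_int (x2 - y2))\<^sup>2
                    + (real_of_int (x3 - y3))\<^sup>2 + (real_of_int (x4 - y4))\<^sup>2"
  have "0 \<le> l"
    unfolding l_def xy l1dist_def by simp
  have "l\<^sup>2 \<le> 4 * S"
    using sum_abs_sq_le[of "real_of_int (x1 - y1)" "real_of_int (x2 - y2)" "real_of_int (x3 - y3)"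
        "real_of_int (x4 - y4)"]
    unfolding l_def S_def xy l1dist_def by simp
  moreover have "(l + 1)\<^sup>2 \<le> 2 * l\<^sup>2 + 2"
    using zero_le_power2[of "l - 1"] by (simp add: power2_eq_square algebra_simps)
  ultimately have "(l + 1)\<^sup>2 \<le> 8 * (S + 4)"
    by (smt (verit))
  moreover have "0 \<le> S"
    unfolding S_def by simp
  ultimately have "1 / (S + 4) \<le> 8 / (l + 1)\<^sup>2"
    using \<open>0 \<le> l\<close> by (simp add: field_simps)
  moreover have "inv_sq_kernel (x - y) = 1 / (S + 4)"
    unfolding inv_sq_kernel_def S_def xy by simp
  ultimately show ?thesis
    unfolding l_def by simp
qed

lemma l1dist_fst_le: "\<bar>fst x - fst y\<bar> \<le> l1dist x y"
  by (cases x; cases y) (simp add: l1dist_def)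

section \<open>The potential of a set\<close>

definition potential :: "pt set \<Rightarrow> pt \<Rightarrow> ennreal" where
  "potential K x = (\<integral>\<^sup>+y. ennreal (inv_sq_kernel (x - y)) \<partial>count_space K)"

lemma potential_superharmonic: "(\<integral>\<^sup>+s. potential K (x + s) \<partial>lazy_step) \<le> potential K x"
proof -
  have "(\<integral>\<^sup>+s. potential K (x + s) \<partial>lazy_step)
      = (\<integral>\<^sup>+y. \<integral>\<^sup>+s. ennreal (inv_sq_kernel ((x - y) + s)) \<partial>lazy_step \<partial>count_space K)"
    unfolding potential_def
    by (subst nn_integral_count_space_nn_integral) (simp_all add: algebra_simps)
  also have "\<dots> \<le> potential K x"
    unfolding potential_def by (intro nn_integral_mono inv_sq_kernel_superharmonic)
  finally show ?thesis .
qed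

lemma potential_ge_on_set:
  assumes "x \<in> K"
  shows "1 \<le> 4 * potential K x"
proof -
  have "ennreal (1/4) \<le> potential K x"
    using nn_integral_ge_point[OF assms, of "\<lambda>y. ennreal (inv_sq_kernel (x - y))"]
    by (simp add: potential_def)
  then have "4 * ennreal (1/4) \<le> 4 * potential K x"
    by (simp add: mult_left_mono)
  moreover have "ennreal 4 * ennreal (1/4) = ennreal (4 * (1/4))"
    by (rule ennreal_mult[symmetric]) auto
  ultimately show ?thesis
    by simp
qed

lemma psi_le_potential:
  assumes "potential K x \<le> ennreal c" "0 \<le> c"
  shows "psi K x \<le> 4 * c"
proof (rule psi_le_superharmonic[where F = "\<lambda>y. 4 * potential K y"])
  show "(\<integral>\<^sup>+s. 4 * potential K (y + s) \<partial>lazy_step) \<le> 4 * potential K y" for y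
    using potential_superharmonic[of K y] by (simp add: nn_integral_cmult mult_left_mono)
  show "4 * potential K x \<le> ennreal (4 * c)"
    using assms by (simp add: ennreal_mult mult_left_mono)
qed (use assms potential_ge_on_set in auto)

section \<open>The potential of the thin set\<close>

definition Kset_slice :: "real \<Rightarrow> nat \<Rightarrow> pt set" where
  "Kset_slice \<alpha> n = (\<lambda>j. (int n, j, 0, 0)) ` {-\<lfloor>real n powr \<alpha>\<rfloor>..\<lfloor>real n powr \<alpha>\<rfloor>}"

lemma Kset_eq_UN_Kset_slice: "Kset \<alpha> = (\<Union>n. Kset_slice \<alpha> n)"
proof (intro equalityI subsetI)
  fix y
  assume "y \<in> Kset \<alpha>"
  then obtain a b where y: "y = (a, b, 0, 0)" "0 \<le> a" "real_of_int \<bar>b\<bar> \<le> real_of_int a powr \<alpha>"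
    unfolding Kset_def by auto
  then have "-b \<le> \<lfloor>real (nat a) powr \<alpha>\<rfloor>" "b \<le> \<lfloor>real (nat a) powr \<alpha>\<rfloor>"
    by (auto simp: le_floor_iff abs_le_iff)
  with y have "y \<in> Kset_slice \<alpha> (nat a)"
    unfolding Kset_slice_def by (auto intro!: image_eqI[of _ _ b])
  then show "y \<in> (\<Union>n. Kset_slice \<alpha> n)"
    by blast
next
  fix y
  assume "y \<in> (\<Union>n. Kset_slice \<alpha> n)"
  then obtain n j where "y = (int n, j, 0, 0)" "\<bar>j\<bar> \<le> \<lfloor>real n powr \<alpha>\<rfloor>"
    unfolding Kset_slice_def by auto
  then show "y \<in> Kset \<alpha>"
    unfolding Kset_def by (simp add: le_floor_iff)
qed

lemma disjoint_family_Kset_slice: "disjoint_family (Kset_slice \<alpha>)"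
  unfolding disjoint_family_on_def Kset_slice_def by auto

lemma finite_Kset_slice: "finite (Kset_slice \<alpha> n)"
  unfolding Kset_slice_def by simp

lemma axis_point_in_Kset_slice: "(int n, 0, 0, 0) \<in> Kset_slice \<alpha> n"
  unfolding Kset_slice_def by (auto intro!: image_eqI[of _ _ 0])

lemma card_Kset_slice_le: "real (card (Kset_slice \<alpha> n)) \<le> 2 * real n powr \<alpha> + 1"
proof -
  have "card (Kset_slice \<alpha> n) = card {-\<lfloor>real n powr \<alpha>\<rfloor>..\<lfloor>real n powr \<alpha>\<rfloor>}"
    unfolding Kset_slice_def by (rule card_image) (auto simp: inj_on_def)
  then show ?thesis
    by simp
qed

lemma potential_Kset_le:
  assumes bound: "\<And>n y. y \<in> Kset_slice \<alpha> n \<Longrightarrow> inv_sq_kernel (x - y) \<le> b n"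
    and summable: "summable (\<lambda>n. (2 * real n powr \<alpha> + 1) * b n)"
  shows "potential (Kset \<alpha>) x \<le> ennreal (\<Sum>n. (2 * real n powr \<alpha> + 1) * b n)"
proof -
  have b_nonneg: "0 \<le> b n" for n
    using bound[OF axis_point_in_Kset_slice, of n] inv_sq_kernel_pos[of "x - (int n, 0, 0, 0)"] by linarith
  have line: "(\<integral>\<^sup>+y\<in>Kset_slice \<alpha> n. ennreal (inv_sq_kernel (x - y)) \<partial>count_space UNIV)
      \<le> ennreal ((2 * real n powr \<alpha> + 1) * b n)" for n
  proof -
    have "(\<integral>\<^sup>+y\<in>Kset_slice \<alpha> n. ennreal (inv_sq_kernel (x - y)) \<partial>count_space UNIV)
        = (\<Sum>y\<in>Kset_slice \<alpha> n. ennreal (inv_sq_kernel (x - y)))"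
      by (simp add: nn_integral_indicator_finite finite_Kset_slice)
    also have "\<dots> \<le> (\<Sum>y\<in>Kset_slice \<alpha> n. ennreal (b n))"
      by (intro sum_mono ennreal_leI bound)
    also have "\<dots> = ennreal (real (card (Kset_slice \<alpha> n)) * b n)"
      using b_nonneg by (simp add: ennreal_mult ennreal_of_nat_eq_real_of_nat)
    also have "\<dots> \<le> ennreal ((2 * real n powr \<alpha> + 1) * b n)"
      by (intro ennreal_leI mult_right_mono card_Kset_slice_le b_nonneg)
    finally show ?thesis .
  qed
  have "potential (Kset \<alpha>) x
      = (\<integral>\<^sup>+y\<in>(\<Union>n. Kset_slice \<alpha> n). ennreal (inv_sq_kernel (x - y)) \<partial>count_space UNIV)"
    unfolding potential_def Kset_eq_UN_Kset_slice by (simp add: nn_integral_count_space_indicator)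
  also have "\<dots> = (\<Sum>n. \<integral>\<^sup>+y\<in>Kset_slice \<alpha> n. ennreal (inv_sq_kernel (x - y)) \<partial>count_space UNIV)"
    by (rule nn_integral_disjoint_family) (simp_all add: disjoint_family_Kset_slice)
  also have "\<dots> \<le> (\<Sum>n. ennreal ((2 * real n powr \<alpha> + 1) * b n))"
    by (intro suminf_le summableI line)
  also have "\<dots> = ennreal (\<Sum>n. (2 * real n powr \<alpha> + 1) * b n)"
    using summable b_nonneg by (intro suminf_ennreal2) auto
  finally show ?thesis .
qed

lemma l1dist_ge_shifted_fst:
  fixes d :: real
  assumes "0 \<le> d" "d \<le> real_of_int (l1dist x y)" "real_of_int \<bar>fst x\<bar> \<le> 2 * d" "0 \<le> fst y"
  shows "real_of_int (fst y) + d \<le> 5 * real_of_int (l1dist x y)"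
proof (cases "real_of_int (fst y) \<le> 4 * d")
  case False
  have "real_of_int (fst y) - real_of_int \<bar>fst x\<bar> \<le> real_of_int (l1dist x y)"
    using l1dist_fst_le[of x y] by linarith
  then show ?thesis
    using False assms by linarith
next
  case True
  then show ?thesis
    using assms by linarith
qed

lemma inv_sq_kernel_far_le:
  fixes d :: real
  assumes "0 < d" "d \<le> real_of_int (l1dist x y)" "real_of_int \<bar>fst x\<bar> \<le> 2 * d" "0 \<le> fst y"
  shows "inv_sq_kernel (x - y) \<le> 200 / (real_of_int (fst y) + d)\<^sup>2"
proof -
  define l where "l = real_of_int (l1dist x y)"
  have "0 < real_of_int (fst y) + d" "real_of_int (fst y) + d \<le> 5 * (l + 1)"
    using l1dist_ge_shifted_fst[OF less_imp_le[OF assms(1)] assms(2-4)] assms unfolding l_def by simp_all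
  then have "(real_of_int (fst y) + d)\<^sup>2 \<le> (5 * (l + 1))\<^sup>2"
    by (intro power_mono) auto
  then have "(real_of_int (fst y) + d)\<^sup>2 \<le> 25 * (l + 1)\<^sup>2"
    by (simp only: power_mult_distrib) simp
  then have "200 / (25 * (l + 1)\<^sup>2) \<le> 200 / (real_of_int (fst y) + d)\<^sup>2"
    using \<open>0 < real_of_int (fst y) + d\<close> by (intro divide_left_mono mult_pos_pos) auto
  then show ?thesis
    using inv_sq_kernel_diff_le[of x y] unfolding l_def by simp
qed

definition Kset_potential_bound :: "real \<Rightarrow> real \<Rightarrow> real" where
  "Kset_potential_bound \<alpha> d = (\<Sum>n. (2 * real n powr \<alpha> + 1) * (200 / (real n + d)\<^sup>2))"

lemma summable_Kset_potential_terms: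
  assumes "0 < \<alpha>" "\<alpha> < 1"
  shows "summable (\<lambda>n. (2 * real n powr \<alpha> + 1) * (200 / (real n + d)\<^sup>2))"
proof (rule summable_comparison_test_bigo)
  show "summable (\<lambda>n. norm (real n powr (\<alpha> - 2)))"
    using assms by (simp add: summable_real_powr_iff)
  show "(\<lambda>n. (2 * real n powr \<alpha> + 1) * (200 / (real n + d)\<^sup>2)) \<in> O(\<lambda>n. real n powr (\<alpha> - 2))"
    using assms by real_asymp
qed

lemma Kset_potential_bound_nonneg: "0 < \<alpha> \<Longrightarrow> \<alpha> < 1 \<Longrightarrow> 0 \<le> Kset_potential_bound \<alpha> d"
  unfolding Kset_potential_bound_def by (intro suminf_nonneg summable_Kset_potential_terms) auto

lemma Kset_potential_bound_tendsto_0: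
  assumes "0 < \<alpha>" "\<alpha> < 1"
  shows "(Kset_potential_bound \<alpha> \<longlongrightarrow> 0) at_top"
proof -
  define a where "a n d = (2 * real n powr \<alpha> + 1) * (200 / (real n + d)\<^sup>2)" for n d
  have "\<forall>\<^sub>F (n, d) in at_top \<times>\<^sub>F at_top. norm (a n d) \<le> a n 1"
  proof -
    have "norm (a n d) \<le> a n 1" if "1 \<le> d" for n d
      unfolding a_def using that
      by (auto intro!: mult_left_mono divide_left_mono power_mono)
    then show ?thesis
      unfolding eventually_prod_filter
      by (intro exI[of _ "\<lambda>_. True"] exI[of _ "\<lambda>d. 1 \<le> d"]) (auto simp: eventually_ge_at_top)
  qed
  moreover have "((\<lambda>d. a n d) \<longlongrightarrow> 0) at_top" for n
    unfolding a_def by real_asymp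
  moreover have "summable (\<lambda>n. a n 1)"
    unfolding a_def by (rule summable_Kset_potential_terms[OF assms])
  ultimately have "((\<lambda>d. \<Sum>n. a n d) \<longlongrightarrow> (\<Sum>n. 0)) at_top"
    using tannerys_theorem[where a = a and b = "\<lambda>_. 0" and M = "\<lambda>n. a n 1" and F = at_top]
    by simp
  then show ?thesis
    unfolding a_def Kset_potential_bound_def by (simp add: fun_eq_iff)
qed

lemma psi_Kset_le:
  assumes "0 < \<alpha>" "\<alpha> < 1" "0 < d" "real_of_int \<bar>fst x\<bar> \<le> 2 * d"
    and "\<And>y. y \<in> Kset \<alpha> \<Longrightarrow> d \<le> real_of_int (l1dist x y)"
  shows "psi (Kset \<alpha>) x \<le> 4 * Kset_potential_bound \<alpha> d"
proof (rule psi_le_potential)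
  show "potential (Kset \<alpha>) x \<le> ennreal (Kset_potential_bound \<alpha> d)"
    unfolding Kset_potential_bound_def
  proof (rule potential_Kset_le)
    fix n y
    assume "y \<in> Kset_slice \<alpha> n"
    then have "y \<in> Kset \<alpha>" "fst y = int n"
      by (auto simp: Kset_eq_UN_Kset_slice Kset_slice_def)
    then show "inv_sq_kernel (x - y) \<le> 200 / (real n + d)\<^sup>2"
      using inv_sq_kernel_far_le[OF assms(3) assms(5) assms(4), of y] by simp
  qed (rule summable_Kset_potential_terms[OF assms(1,2)])
qed (rule Kset_potential_bound_nonneg[OF assms(1,2)])

lemma psi_Kset_small_far_away:
  assumes "0 < \<alpha>" "\<alpha> < 1" "0 < \<delta>"
  shows "\<exists>L>0. \<forall>x xs. nearest (Kset \<alpha>) x xs \<and> real_of_int \<bar>fst xs\<bar> \<le> real_of_int (l1dist x xs)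
      \<and> L \<le> real_of_int \<bar>fst xs\<bar> \<longrightarrow> psi (Kset \<alpha>) x \<le> \<delta>"
proof -
  have "\<forall>\<^sub>F d in at_top. Kset_potential_bound \<alpha> d < \<delta> / 4"
    using Kset_potential_bound_tendsto_0[OF assms(1,2)] assms(3) by (intro order_tendstoD) auto
  then obtain L where L: "\<And>d. L \<le> d \<Longrightarrow> Kset_potential_bound \<alpha> d < \<delta> / 4"
    by (auto simp: eventually_at_top_linorder)
  show ?thesis
  proof (intro exI[of _ "max 1 L"] conjI allI impI)
    fix x xs
    assume "nearest (Kset \<alpha>) x xs \<and> real_of_int \<bar>fst xs\<bar> \<le> real_of_int (l1dist x xs)
      \<and> max 1 L \<le> real_of_int \<bar>fst xs\<bar>"
    then have near: "nearest (Kset \<alpha>) x xs"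
      and fst_le: "real_of_int \<bar>fst xs\<bar> \<le> real_of_int (l1dist x xs)"
      and far: "max 1 L \<le> real_of_int \<bar>fst xs\<bar>"
      by blast+
    define d where "d = real_of_int (l1dist x xs)"
    have "real_of_int \<bar>fst x\<bar> \<le> 2 * d"
      using l1dist_fst_le[of x xs] fst_le unfolding d_def by linarith
    moreover have "d \<le> real_of_int (l1dist x y)" if "y \<in> Kset \<alpha>" for y
      using near that unfolding nearest_def d_def by simp
    moreover have "0 < d" "L \<le> d"
      using fst_le far unfolding d_def by linarith+
    ultimately have "psi (Kset \<alpha>) x \<le> 4 * Kset_potential_bound \<alpha> d"
      using psi_Kset_le[OF assms(1,2)] by blast
    then show "psi (Kset \<alpha>) x \<le> \<delta>"
      using L[OF \<open>L \<le> d\<close>] by linarith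
  qed simp
qed

lemma nearest_Kset_above_axis:
  assumes "0 \<le> N"
  shows "nearest (Kset \<alpha>) (N, 0, N, 0) (N, 0, 0, 0)"
  using assms unfolding nearest_def by (auto simp: Kset_def l1dist_def)

theorem lemma3p30:
  fixes \<alpha> :: real
  assumes "0 < \<alpha>" and "\<alpha> < 1"
  shows "S_transient (Kset \<alpha>) \<and>
    (\<forall>\<epsilon>::real. 0 < \<epsilon> \<and> \<epsilon> < 1 \<longrightarrow>
      (\<exists>L::real. L > 0 \<and>
        (\<forall>x xs. x \<notin> Kset \<alpha> \<and> nearest (Kset \<alpha>) x xs \<and>
           real_of_int (l1dist x xs) \<ge> real_of_int \<bar>fst xs\<bar> \<and>
           real_of_int \<bar>fst xs\<bar> \<ge> L
           \<longrightarrow> psi (Kset \<alpha>) x \<le> 1 - \<epsilon>)))"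
proof (intro conjI allI impI)
  obtain L where "0 < L" and L: "\<forall>x xs. nearest (Kset \<alpha>) x xs
      \<and> real_of_int \<bar>fst xs\<bar> \<le> real_of_int (l1dist x xs) \<and> L \<le> real_of_int \<bar>fst xs\<bar>
      \<longrightarrow> psi (Kset \<alpha>) x \<le> 1/2"
    using psi_Kset_small_far_away[OF assms, of "1/2"] by auto
  define N where "N = \<lceil>L\<rceil>"
  have "0 \<le> N" "L \<le> real_of_int N"
    using \<open>0 < L\<close> unfolding N_def by (simp_all add: le_ceiling_iff)
  then have "psi (Kset \<alpha>) (N, 0, N, 0) \<le> 1/2"
    using L[rule_format, OF conjI[OF nearest_Kset_above_axis]] by (simp add: l1dist_def)
  then show "S_transient (Kset \<alpha>)"
    unfolding S_transient_def by (intro exI[of _ "(N, 0, N, 0)"]) simp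
next
  fix \<epsilon> :: real
  assume "0 < \<epsilon> \<and> \<epsilon> < 1"
  then have "0 < 1 - \<epsilon>"
    by simp
  then show "\<exists>L>0. \<forall>x xs. x \<notin> Kset \<alpha> \<and> nearest (Kset \<alpha>) x xs \<and>
      real_of_int \<bar>fst xs\<bar> \<le> real_of_int (l1dist x xs) \<and> L \<le> real_of_int \<bar>fst xs\<bar>
      \<longrightarrow> psi (Kset \<alpha>) x \<le> 1 - \<epsilon>"
    using psi_Kset_small_far_away[OF assms] by fast
qed

end
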